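(* Let $H$ be a finite, connected, $d$-regular graph on $[n]$ and $\Phi(x,y)$ a standard symmetric polynomial of partial degree $d$. Then $G(\Phi)^*$ has some component isomorphic to $H$ if and only if $U(H,\Phi)\ne\emptyset$.
   Context: For a symmetric $\Phi(x,y)\in\mathbb{C}[x,y]$ of partial degree $d$ (degree $d$ in $y$), write $\Phi(x,y)=\sum_{i=0}^d a_i(x)y^i$. $G(\Phi)$ has vertex set $\mathbb{C}$, the neighbours of $u$ being the roots of $\Phi(u,y)$ with multiplicity (edges = points of $\mathbb{V}(\Phi)$). A component is singular if it has a loop ($\Phi(u,u)=0$), a multiple edge ($\Phi(u,y)$ has a multiple root) or a defective vertex ($a_d(u)=0$). $\Phi$ is standard if it is squarefree, $\Phi(x,x)\not\equiv 0$, and $\Phi$ has no nonconstant factor depending only on $x$ (or only on $y$); then only finitely many components are singular and $G(\Phi)^*$ is $G(\Phi)$ with these removed. With $E$ the edge set of $H$: $S(H,\Phi)=\{\Phi(x_i,x_j):ij\in E\}$, $W(H,\Phi)=\mathbb{V}(S(H,\Phi))\subseteq\mathbb{C}^n$, $Z(H,\Phi)=W(H,\Phi)\cap\bigcup_{i>j}\mathbb{V}(x_i-x_j)$, and $U(H,\Phi)=\overline{W(H,\Phi)\setminus Z(H,\Phi)}$ (Zariski closure). *)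

theory Defs
  imports "HOL-Computational_Algebra.Computational_Algebra"
begin

text \<open>A bivariate polynomial Phi(x,y) = sum_i a_i(x) y^i over the complex numbers is
represented as a polynomial in y whose coefficients a_i are polynomials in x.\<close>

type_synonym bipoly = "complex poly poly"

definition sect :: "bipoly \<Rightarrow> complex \<Rightarrow> complex poly" where
  "sect Phi u = map_poly (\<lambda>a. poly a u) Phi"

definition ev2 :: "bipoly \<Rightarrow> complex \<Rightarrow> complex \<Rightarrow> complex" where
  "ev2 Phi u v = poly (sect Phi u) v"

definition symmetric_bipoly :: "bipoly \<Rightarrow> bool" where
  "symmetric_bipoly Phi \<longleftrightarrow> (\<forall>u v. ev2 Phi u v = ev2 Phi v u)"

definition partial_degree :: "bipoly \<Rightarrow> nat" where
  "partial_degree Phi = degree Phi"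

definition standard :: "bipoly \<Rightarrow> bool" where
  "standard Phi \<longleftrightarrow> squarefree Phi
     \<and> (\<exists>u. ev2 Phi u u \<noteq> 0)
     \<and> (\<forall>p::complex poly. [:p:] dvd Phi \<longrightarrow> degree p = 0)
     \<and> (\<forall>q::complex poly. map_poly (\<lambda>c. [:c:]) q dvd Phi \<longrightarrow> degree q = 0)"

definition Gadj :: "bipoly \<Rightarrow> complex \<Rightarrow> complex \<Rightarrow> bool" where
  "Gadj Phi u v \<longleftrightarrow> ev2 Phi u v = 0"

definition component :: "bipoly \<Rightarrow> complex \<Rightarrow> complex set" where
  "component Phi u = {v. (Gadj Phi)\<^sup>*\<^sup>* u v}"

definition is_component :: "bipoly \<Rightarrow> complex set \<Rightarrow> bool" where
  "is_component Phi C \<longleftrightarrow> (\<exists>u. C = component Phi u)"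

text \<open>A vertex carrying a loop, a multiple edge, or being defective (a_d(u) = 0).\<close>
definition bad_vertex :: "bipoly \<Rightarrow> complex \<Rightarrow> bool" where
  "bad_vertex Phi u \<longleftrightarrow> ev2 Phi u u = 0
     \<or> \<not> rsquarefree (sect Phi u)
     \<or> poly (lead_coeff Phi) u = 0"

definition singular_component :: "bipoly \<Rightarrow> complex set \<Rightarrow> bool" where
  "singular_component Phi C \<longleftrightarrow> (\<exists>u\<in>C. bad_vertex Phi u)"

text \<open>Components of G(Phi)^*: the nonsingular components.\<close>
definition star_component :: "bipoly \<Rightarrow> complex set \<Rightarrow> bool" where
  "star_component Phi C \<longleftrightarrow> is_component Phi C \<and> \<not> singular_component Phi C"

inductive_set poly_fun :: "(('v \<Rightarrow> complex) \<Rightarrow> complex) set" where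
  const: "(\<lambda>x. c) \<in> poly_fun"
| var: "(\<lambda>x. x i) \<in> poly_fun"
| add: "p \<in> poly_fun \<Longrightarrow> q \<in> poly_fun \<Longrightarrow> (\<lambda>x. p x + q x) \<in> poly_fun"
| mult: "p \<in> poly_fun \<Longrightarrow> q \<in> poly_fun \<Longrightarrow> (\<lambda>x. p x * q x) \<in> poly_fun"

definition zariski_closure :: "('v \<Rightarrow> complex) set \<Rightarrow> ('v \<Rightarrow> complex) set" where
  "zariski_closure S = {x. \<forall>p\<in>poly_fun. (\<forall>s\<in>S. p s = 0) \<longrightarrow> p x = 0}"

definition W_set :: "('v \<Rightarrow> 'v \<Rightarrow> bool) \<Rightarrow> bipoly \<Rightarrow> ('v \<Rightarrow> complex) set" where
  "W_set E Phi = {x. \<forall>i j. E i j \<longrightarrow> ev2 Phi (x i) (x j) = 0}"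

definition Z_set :: "('v \<Rightarrow> 'v \<Rightarrow> bool) \<Rightarrow> bipoly \<Rightarrow> ('v \<Rightarrow> complex) set" where
  "Z_set E Phi = W_set E Phi \<inter> {x. \<exists>i j. i \<noteq> j \<and> x i = x j}"

definition U_set :: "('v \<Rightarrow> 'v \<Rightarrow> bool) \<Rightarrow> bipoly \<Rightarrow> ('v \<Rightarrow> complex) set" where
  "U_set E Phi = zariski_closure (W_set E Phi - Z_set E Phi)"

definition simple_graph :: "('v \<Rightarrow> 'v \<Rightarrow> bool) \<Rightarrow> bool" where
  "simple_graph E \<longleftrightarrow> (\<forall>i j. E i j \<longrightarrow> E j i) \<and> (\<forall>i. \<not> E i i)"

definition connected_graph :: "('v \<Rightarrow> 'v \<Rightarrow> bool) \<Rightarrow> bool" where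
  "connected_graph E \<longleftrightarrow> (\<forall>i j. E\<^sup>*\<^sup>* i j)"

definition regular_graph :: "('v \<Rightarrow> 'v \<Rightarrow> bool) \<Rightarrow> nat \<Rightarrow> bool" where
  "regular_graph E d \<longleftrightarrow> (\<forall>i. card {j. E i j} = d)"

definition component_iso :: "('v \<Rightarrow> 'v \<Rightarrow> bool) \<Rightarrow> bipoly \<Rightarrow> complex set \<Rightarrow> bool" where
  "component_iso E Phi C \<longleftrightarrow> (\<exists>f. bij_betw f UNIV C \<and> (\<forall>i j. E i j \<longleftrightarrow> Gadj Phi (f i) (f j)))"

end

theory Submission
  imports Defs
begin

text \<open>A point x of W(H,\<Phi>) - Z(H,\<Phi>) is an injective labelling of the vertices of H by complex
numbers that sends edges to edges of G(\<Phi>). At a vertex u = x i, the polynomial \<Phi>(u,y) has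
degree at most d and vanishes at the d distinct labels of the neighbours of i; since it is not
identically zero, these are all its roots and each is simple, and its degree is exactly d. Hence
x i has no further neighbours, no multiple edge, no loop (i is not its own neighbour) and is not
defective, so by connectedness of H the image of x is a whole nonsingular component of G(\<Phi>),
isomorphic to H via x. Conversely an isomorphism onto a component is itself a point of
W(H,\<Phi>) - Z(H,\<Phi>), and W(H,\<Phi>) - Z(H,\<Phi>) is nonempty iff its Zariski closure is.\<close>

lemma proots_eq_mset_set:
  fixes p :: "'a::idom poly"
  assumes "p \<noteq> 0" and "finite S" and "degree p \<le> card S"
    and "\<And>s. s \<in> S \<Longrightarrow> poly p s = 0"
  shows "proots p = mset_set S" and "degree p = card S"
proof -
  have sub: "mset_set S \<subseteq># proots p"
  proof (rule mset_subset_eqI)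
    fix s
    show "count (mset_set S) s \<le> count (proots p) s"
      using assms by (auto simp: count_mset_set' order_gt_0_iff Suc_le_eq)
  qed
  have "size (proots p) \<le> size (mset_set S)"
    using size_proots_le[of p] assms(3) by simp
  then show "proots p = mset_set S"
    using sub mset_subset_size by (metis leD subset_mset.le_less)
  then show "degree p = card S"
    using size_proots_le[of p] assms(3) by simp
qed

lemma coeff_sect: "coeff (sect Phi u) i = poly (coeff Phi i) u"
  unfolding sect_def by (simp add: coeff_map_poly)

lemma degree_sect_le: "degree (sect Phi u) \<le> degree Phi"
  unfolding sect_def by (rule map_poly_degree_leq)

lemma sect_nonzero:
  assumes no_x_factor: "\<forall>p. [:p:] dvd Phi \<longrightarrow> degree p = 0"
  shows "sect Phi u \<noteq> 0"
proof
  assume "sect Phi u = 0"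
  define r :: "complex poly" where "r = [:-u, 1:]"
  have r_dvd: "r dvd coeff Phi i" for i
    using \<open>sect Phi u = 0\<close> coeff_sect[of Phi u i] poly_eq_0_iff_dvd unfolding r_def by force
  have "Phi = [:r:] * map_poly (\<lambda>a. a div r) Phi"
    by (rule poly_eqI) (simp add: coeff_map_poly r_dvd)
  then have "[:r:] dvd Phi"
    by (metis dvd_triv_left)
  then show False
    using no_x_factor unfolding r_def by fastforce
qed

lemma mem_W_minus_Z_iff:
  "x \<in> W_set E Phi - Z_set E Phi \<longleftrightarrow> inj x \<and> (\<forall>i j. E i j \<longrightarrow> Gadj Phi (x i) (x j))"
  unfolding W_set_def Z_set_def Gadj_def inj_def by blast

lemma zariski_closure_empty: "zariski_closure {} = {}"
proof -
  have "x \<notin> zariski_closure {}" for x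
  proof
    assume "x \<in> zariski_closure {}"
    then have "\<forall>p\<in>poly_fun. p x = 0"
      unfolding zariski_closure_def by simp
    from bspec[OF this poly_fun.const[of 1]] show False
      by simp
  qed
  then show ?thesis
    by blast
qed

lemma subset_zariski_closure: "S \<subseteq> zariski_closure S"
  unfolding zariski_closure_def by auto

lemma U_set_eq_empty_iff: "U_set E Phi = {} \<longleftrightarrow> W_set E Phi - Z_set E Phi = {}"
  unfolding U_set_def by (metis subset_empty subset_zariski_closure zariski_closure_empty)

context
  fixes E :: "'v::finite \<Rightarrow> 'v \<Rightarrow> bool" and Phi :: bipoly and x :: "'v \<Rightarrow> complex"
  assumes simple: "simple_graph E"
    and regular: "regular_graph E (degree Phi)"
    and no_x_factor: "\<forall>p. [:p:] dvd Phi \<longrightarrow> degree p = 0"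
    and embedding: "x \<in> W_set E Phi - Z_set E Phi"
begin

lemma sect_at_embedded_vertex:
  shows proots_sect_embedded: "proots (sect Phi (x i)) = mset_set (x ` {j. E i j})"
    and degree_sect_embedded: "degree (sect Phi (x i)) = degree Phi"
proof -
  have inj: "inj x" and edges: "\<And>i j. E i j \<Longrightarrow> ev2 Phi (x i) (x j) = 0"
    using embedding unfolding mem_W_minus_Z_iff Gadj_def by auto
  have card_nbrs: "card (x ` {j. E i j}) = degree Phi"
    using regular inj unfolding regular_graph_def by (simp add: card_image inj_on_def inj_def)
  have fin: "finite (x ` {j. E i j})"
    by simp
  have deg: "degree (sect Phi (x i)) \<le> card (x ` {j. E i j})"
    using degree_sect_le card_nbrs by simp
  have vanish: "poly (sect Phi (x i)) s = 0" if "s \<in> x ` {j. E i j}" for s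
    using that edges by (auto simp: ev2_def)
  note roots = proots_eq_mset_set[OF sect_nonzero[OF no_x_factor] fin deg vanish]
  show "proots (sect Phi (x i)) = mset_set (x ` {j. E i j})"
    by (rule roots(1))
  show "degree (sect Phi (x i)) = degree Phi"
    using roots(2) card_nbrs by simp
qed

lemma Gadj_embedded_iff: "Gadj Phi (x i) w \<longleftrightarrow> (\<exists>j. E i j \<and> w = x j)"
proof -
  have "Gadj Phi (x i) w \<longleftrightarrow> w \<in># proots (sect Phi (x i))"
    using sect_nonzero[OF no_x_factor] by (simp add: Gadj_def ev2_def)
  then show ?thesis
    by (auto simp: proots_sect_embedded)
qed

lemma embedded_vertex_not_bad: "\<not> bad_vertex Phi (x i)"
proof -
  have "inj x" and irrefl: "\<not> E i i"
    using embedding simple unfolding mem_W_minus_Z_iff simple_graph_def by auto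
  then have no_loop: "ev2 Phi (x i) (x i) \<noteq> 0"
    using Gadj_embedded_iff[of i "x i"] by (auto simp: Gadj_def inj_def)
  have "order a (sect Phi (x i)) \<le> 1" for a
  proof -
    have "order a (sect Phi (x i)) = count (mset_set (x ` {j. E i j})) a"
      using sect_nonzero[OF no_x_factor] by (simp flip: proots_sect_embedded)
    also have "\<dots> \<le> 1"
      by (simp add: count_mset_set')
    finally show ?thesis .
  qed
  then have "rsquarefree (sect Phi (x i))"
    using sect_nonzero[OF no_x_factor] unfolding rsquarefree_def
    by (metis le_neq_implies_less less_one)
  moreover have "poly (lead_coeff Phi) (x i) = lead_coeff (sect Phi (x i))"
    by (simp add: coeff_sect degree_sect_embedded)
  then have "poly (lead_coeff Phi) (x i) \<noteq> 0"
    using sect_nonzero[OF no_x_factor] by simp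
  ultimately show ?thesis
    using no_loop unfolding bad_vertex_def by blast
qed

lemma component_embedded_eq_range:
  assumes "connected_graph E"
  shows "component Phi (x i) = range x"
proof
  show "component Phi (x i) \<subseteq> range x"
  proof
    fix w assume "w \<in> component Phi (x i)"
    then have "(Gadj Phi)\<^sup>*\<^sup>* (x i) w"
      unfolding component_def by simp
    then show "w \<in> range x"
      by (induction rule: rtranclp_induct) (auto simp: Gadj_embedded_iff)
  qed
next
  show "range x \<subseteq> component Phi (x i)"
  proof
    fix w assume "w \<in> range x"
    then obtain j where "w = x j" by blast
    have "E\<^sup>*\<^sup>* i j"
      using assms unfolding connected_graph_def by blast
    then have "(Gadj Phi)\<^sup>*\<^sup>* (x i) (x j)"
      by (induction rule: rtranclp_induct)
        (auto intro: rtranclp.rtrancl_into_rtrancl Gadj_embedded_iff[THEN iffD2])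
    then show "w \<in> component Phi (x i)"
      unfolding component_def \<open>w = x j\<close> by simp
  qed
qed

lemma range_embedding_star_component_iso:
  assumes "connected_graph E"
  shows "star_component Phi (range x) \<and> component_iso E Phi (range x)"
proof
  obtain i :: 'v where True by blast
  show "star_component Phi (range x)"
    unfolding star_component_def is_component_def singular_component_def
    using component_embedded_eq_range[OF assms, of i] embedded_vertex_not_bad by auto
  have inj: "inj x"
    using embedding unfolding mem_W_minus_Z_iff by blast
  show "component_iso E Phi (range x)"
    unfolding component_iso_def
  proof (intro exI conjI allI)
    show "bij_betw x UNIV (range x)"
      using inj by (simp add: bij_betw_def)
    fix i j
    show "E i j \<longleftrightarrow> Gadj Phi (x i) (x j)"
      using Gadj_embedded_iff[of i "x j"] inj by (auto simp: inj_def)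
  qed
qed

end

theorem mainTheorem4:
  fixes E :: "'v::finite \<Rightarrow> 'v \<Rightarrow> bool" and Phi :: bipoly and d :: nat
  assumes "simple_graph E" and "connected_graph E" and "regular_graph E d"
    and "symmetric_bipoly Phi" and "standard Phi" and "partial_degree Phi = d"
  shows "(\<exists>C. star_component Phi C \<and> component_iso E Phi C) \<longleftrightarrow> U_set E Phi \<noteq> {}"
proof
  assume "\<exists>C. star_component Phi C \<and> component_iso E Phi C"
  then obtain C f where "bij_betw f UNIV C" and "\<forall>i j. E i j \<longleftrightarrow> Gadj Phi (f i) (f j)"
    unfolding component_iso_def by blast
  then have "f \<in> W_set E Phi - Z_set E Phi"
    unfolding mem_W_minus_Z_iff bij_betw_def by blast
  then show "U_set E Phi \<noteq> {}"
    using U_set_eq_empty_iff by blast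
next
  assume "U_set E Phi \<noteq> {}"
  then obtain x where x: "x \<in> W_set E Phi - Z_set E Phi"
    using U_set_eq_empty_iff by blast
  have "regular_graph E (degree Phi)" and "\<forall>p. [:p:] dvd Phi \<longrightarrow> degree p = 0"
    using assms unfolding partial_degree_def standard_def by auto
  from range_embedding_star_component_iso[OF assms(1) this x assms(2)]
  show "\<exists>C. star_component Phi C \<and> component_iso E Phi C" by blast
qed

end
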